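(* Let $A$ be an $n\times n$ real matrix with $\operatorname{sign}\det A=(-1)^n$, and assume $A$ has a Hurwitz-stable $(n-1)\times(n-1)$ principal submatrix. Then there exists a positive diagonal matrix $D$ such that $AD$ is Hurwitz-stable.
   Context: A square matrix is Hurwitz-stable if all its eigenvalues have negative real part. *)

theory Defs
  imports "Jordan_Normal_Form.Char_Poly" "Jordan_Normal_Form.DL_Submatrix"
begin

definition hurwitz_stable :: "real mat \<Rightarrow> bool" where
  "hurwitz_stable A \<longleftrightarrow> square_mat A \<and>
     (\<forall>\<mu>. eigenvalue (map_mat complex_of_real A) \<mu> \<longrightarrow> Re \<mu> < 0)"

definition principal_del :: "'a mat \<Rightarrow> nat \<Rightarrow> 'a mat" where
  "principal_del A k = submatrix A ({0..<dim_row A} - {k}) ({0..<dim_col A} - {k})"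

definition positive_diagonal :: "real mat \<Rightarrow> bool" where
  "positive_diagonal D \<longleftrightarrow> square_mat D \<and> diagonal_mat D \<and>
     (\<forall>i<dim_row D. D $$ (i,i) > 0)"

end

(*
  Scaling column k of A by \<epsilon> turns the characteristic polynomial into
  (1 - \<epsilon>) z q(z) + \<epsilon> p(z), where p and q are the characteristic polynomials of A
  and of the stable principal submatrix A' (the determinant is affine in column k).
  As \<epsilon> \<rightarrow> 0 the roots tend to those of z q(z): n - 1 in the open left half-plane
  and a simple one at 0. That last root moves left because p(0) / q(0) > 0: q(0) > 0
  as q is real, monic and has no root in [0, \<infinity>), and p(0) = (-1)^n det A > 0.
  Concretely, a root z with Re z \<ge> 0 near 0 would satisfy
  z = -(\<epsilon> / (1 - \<epsilon>)) p(z) / q(z), which has negative real part, while on the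
  compact rest of the closed right half-disc of radius \<Sum>|a_ij| (which contains all
  eigenvalues) z q(z) is bounded away from 0, so a small \<epsilon> creates no root there.
*)
theory Submission
  imports Defs "HOL-Analysis.Topology_Euclidean_Space"
begin

no_notation vec_nth (infixl \<open>$\<close> 90)

lemma pick_atLeastLessThan_remove:
  assumes "k < n" "i < n - 1"
  shows "pick ({0..<n} - {k}) i = (if i < k then i else Suc i)"
proof -
  define j where "j = (if i < k then i else Suc i)"
  have j: "j \<in> {0..<n} - {k}" using assms by (auto simp: j_def)
  have "{a \<in> {0..<n} - {k}. a < j} = (if i < k then {0..<i} else {0..<Suc i} - {k})"
    using assms by (auto simp: j_def)
  then have "card {a \<in> {0..<n} - {k}. a < j} = i"
    using assms by auto
  then show ?thesis
    using pick_card_in_set[OF j] by (simp add: j_def)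
qed

lemma principal_del_eq_mat_delete:
  assumes A: "A \<in> carrier_mat n n" and k: "k < n"
  shows "principal_del A k = mat_delete A k k"
proof -
  have "{i. i < n \<and> i \<in> {0..<n} - {k}} = {0..<n} - {k}" by auto
  then have "card {i. i < n \<and> i \<in> {0..<n} - {k}} = n - 1" using k by simp
  then show ?thesis
    unfolding principal_del_def using A k
    by (intro eq_matI)
      (auto simp: dim_submatrix submatrix_index pick_atLeastLessThan_remove mat_delete_def)
qed

lemma det_affine_column:
  fixes M M' :: "'a :: comm_ring_1 mat"
  assumes M: "M \<in> carrier_mat n n" and M': "M' \<in> carrier_mat n n" and k: "k < n"
    and off_k: "\<And>i j. i < n \<Longrightarrow> j < n \<Longrightarrow> j \<noteq> k \<Longrightarrow> M' $$ (i,j) = M $$ (i,j)"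
    and at_k: "\<And>i. i < n \<Longrightarrow> M' $$ (i,k) = a * M $$ (i,k) + (if i = k then b else 0)"
  shows "det M' = a * det M + b * det (mat_delete M k k)"
proof -
  have "mat_delete M' i k = mat_delete M i k" for i
    by (rule eq_matI) (use M M' k off_k in \<open>auto simp: mat_delete_def\<close>)
  then have same_cofactor: "cofactor M' i k = cofactor M i k" for i
    by (simp add: cofactor_def)
  have "det M' = (\<Sum>i<n. (a * M $$ (i,k) + (if i = k then b else 0)) * cofactor M i k)"
    using laplace_expansion_column[OF M' k] by (simp add: at_k same_cofactor)
  also have "\<dots> = a * (\<Sum>i<n. M $$ (i,k) * cofactor M i k) + b * cofactor M k k"
    using k by (simp add: distrib_right sum.distrib sum_distrib_left mult.assoc
        if_distrib[where f = "\<lambda>x. x * y" for y] cong: if_cong)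
  also have "\<dots> = a * det M + b * det (mat_delete M k k)"
    using laplace_expansion_column[OF M k] by (simp add: cofactor_def)
  finally show ?thesis .
qed

lemma char_poly_mult_diag_column:
  fixes B :: "'a :: comm_ring_1 mat"
  assumes B: "B \<in> carrier_mat n n" and k: "k < n"
  shows "char_poly (B * mat_diag n (\<lambda>j. if j = k then e else 1))
    = Polynomial.smult e (char_poly B)
      + Polynomial.smult (1 - e) (pCons 0 (char_poly (mat_delete B k k)))"
proof -
  let ?M = "char_poly_matrix B"
  let ?M' = "char_poly_matrix (B * mat_diag n (\<lambda>j. if j = k then e else 1))"
  have "det ?M' = [:e:] * det ?M + [:0, 1 - e:] * det (mat_delete ?M k k)"
  proof (rule det_affine_column[of _ n])
    fix i assume "i < n"
    then show "?M' $$ (i,k) = [:e:] * ?M $$ (i,k) + (if i = k then [:0, 1 - e:] else 0)"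
      using B k by (auto simp: char_poly_matrix_def mat_diag_mult_right algebra_simps)
  qed (use B k in \<open>auto simp: char_poly_matrix_def mat_diag_mult_right\<close>)
  moreover have "mat_delete ?M k k = char_poly_matrix (mat_delete B k k)"
    using B k by (auto simp: char_poly_matrix_def mat_delete_def)
  ultimately show ?thesis
    by (simp add: char_poly_def)
qed

lemma poly_char_poly_0:
  assumes A: "A \<in> carrier_mat n n"
  shows "poly (char_poly A) 0 = (-1) ^ n * det (A :: 'a :: field mat)"
proof -
  have "- char_matrix A 0 = (-1) \<cdot>\<^sub>m A"
    using A by (auto simp: char_matrix_def)
  then show ?thesis
    using A by (simp add: char_poly_matrix[OF A])
qed

lemma eigenvalue_norm_le_sum_norm_entries:
  fixes M :: "'a :: real_normed_field mat"
  assumes M: "M \<in> carrier_mat n n" and ev: "eigenvalue M \<mu>"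
  shows "norm \<mu> \<le> (\<Sum>i<n. \<Sum>j<n. norm (M $$ (i,j)))"
proof -
  from ev obtain v where v: "v \<in> carrier_vec n" "v \<noteq> 0\<^sub>v n" "M *\<^sub>v v = \<mu> \<cdot>\<^sub>v v"
    unfolding eigenvalue_def eigenvector_def using M by auto
  have "n \<noteq> 0" using v by auto
  then have "Max ((\<lambda>j. norm (v $ j)) ` {..<n}) \<in> (\<lambda>j. norm (v $ j)) ` {..<n}"
    by (intro Max_in) auto
  then obtain i where i: "i < n" and "norm (v $ i) = Max ((\<lambda>j. norm (v $ j)) ` {..<n})"
    by auto
  then have i_max: "norm (v $ j) \<le> norm (v $ i)" if "j < n" for j
    using that by simp
  have "v $ i \<noteq> 0"
  proof
    assume "v $ i = 0"
    then have "v = 0\<^sub>v n" using i_max v(1) by (intro eq_vecI) auto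
    with v(2) show False ..
  qed
  have "\<mu> * v $ i = (M *\<^sub>v v) $ i"
    using v i by simp
  also have "\<dots> = (\<Sum>j<n. M $$ (i,j) * v $ j)"
    using M v(1) i by (auto simp: scalar_prod_def lessThan_atLeast0 intro!: sum.cong)
  finally have "norm \<mu> * norm (v $ i) = norm (\<Sum>j<n. M $$ (i,j) * v $ j)"
    by (metis norm_mult)
  also have "\<dots> \<le> (\<Sum>j<n. norm (M $$ (i,j)) * norm (v $ j))"
    by (rule order.trans[OF norm_sum]) (simp add: norm_mult)
  also have "\<dots> \<le> (\<Sum>j<n. norm (M $$ (i,j))) * norm (v $ i)"
    unfolding sum_distrib_right by (rule sum_mono) (auto intro: mult_left_mono i_max)
  finally have "norm \<mu> \<le> (\<Sum>j<n. norm (M $$ (i,j)))"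
    using \<open>v $ i \<noteq> 0\<close> by simp
  also have "\<dots> \<le> (\<Sum>i<n. \<Sum>j<n. norm (M $$ (i,j)))"
    using i by (intro member_le_sum sum_nonneg) auto
  finally show ?thesis .
qed

lemma poly_pos_if_no_root_above:
  fixes p :: "real poly"
  assumes lc: "lead_coeff p > 0" and no_root: "\<And>y. y \<ge> a \<Longrightarrow> poly p y \<noteq> 0" and x: "x \<ge> a"
  shows "poly p x > 0"
proof (rule ccontr)
  assume "\<not> poly p x > 0"
  with no_root[OF x] have neg: "poly p x < 0" by simp
  obtain N where N: "\<And>y. y \<ge> N \<Longrightarrow> poly p y \<ge> lead_coeff p"
    using poly_pinfty_gt_lc[OF lc] by blast
  have "poly p (max N x + 1) \<ge> lead_coeff p"
    by (rule N) simp
  with lc have "poly p (max N x + 1) > 0" by linarith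
  then obtain y where "x < y" "poly p y = 0"
    using poly_IVT_pos[OF _ neg, of "max N x + 1"] by force
  with no_root[of y] x show False by simp
qed

lemma hurwitz_stable_char_poly_pos:
  assumes stable: "hurwitz_stable M" and M: "M \<in> carrier_mat n n" and t: "t \<ge> 0"
  shows "poly (char_poly M) t > 0"
proof (rule poly_pos_if_no_root_above[OF _ _ t])
  show "lead_coeff (char_poly M) > 0"
    using degree_monic_char_poly[OF M] by simp
  fix y :: real assume "y \<ge> 0"
  then have "\<not> eigenvalue (map_mat complex_of_real M) (of_real y)"
    using stable by (auto simp: hurwitz_stable_def)
  then show "poly (char_poly M) y \<noteq> 0"
    using M by (simp add: eigenvalue_root_char_poly[of _ n] of_real_hom.char_poly_hom)
qed

lemma convex_comb_nonzero_near_0: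
  fixes c P :: "complex \<Rightarrow> complex"
  assumes "isCont c 0" "isCont P 0" and pos: "Re (P 0 / c 0) > 0"
  obtains \<delta> where "\<delta> > 0" and
    "\<And>z \<epsilon>. norm z < \<delta> \<Longrightarrow> Re z \<ge> 0 \<Longrightarrow> 0 < \<epsilon> \<Longrightarrow> \<epsilon> < 1 \<Longrightarrow>
       (1 - of_real \<epsilon>) * z * c z + of_real \<epsilon> * P z \<noteq> 0"
proof -
  have "c 0 \<noteq> 0" using pos by auto
  with assms have "isCont (\<lambda>z. Re (P z / c z)) 0"
    by (intro continuous_Re isCont_divide)
  then have "((\<lambda>z. Re (P z / c z)) \<longlongrightarrow> Re (P 0 / c 0)) (nhds 0)"
    using tendsto_at_iff_tendsto_nhds[of "\<lambda>z. Re (P z / c z)" 0] by (simp add: isCont_def)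
  from order_tendstoD(1)[OF this pos] have "eventually (\<lambda>z. Re (P z / c z) > 0) (nhds 0)" .
  then obtain \<delta> where "\<delta> > 0" and near: "\<And>z. norm z < \<delta> \<Longrightarrow> Re (P z / c z) > 0"
    by (auto simp: eventually_nhds_metric dist_norm)
  show ?thesis
  proof (rule that[OF \<open>\<delta> > 0\<close>], rule notI)
    fix z :: complex and \<epsilon> :: real
    assume z: "norm z < \<delta>" "Re z \<ge> 0" and \<epsilon>: "0 < \<epsilon>" "\<epsilon> < 1"
      and root: "(1 - of_real \<epsilon>) * z * c z + of_real \<epsilon> * P z = 0"
    \<comment> \<open>as \<open>w / 0 = 0\<close>, positivity of \<open>Re (P z / c z)\<close> already excludes \<open>c z = 0\<close>\<close>
    have "c z \<noteq> 0" using near[OF z(1)] by auto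
    define h where "h = P z / c z"
    define r where "r = \<epsilon> / (1 - \<epsilon>)"
    have "z = - (of_real r * h)"
      using root \<epsilon> \<open>c z \<noteq> 0\<close> unfolding h_def r_def by (simp add: field_simps)
    then have "Re z = - (r * Re h)"
      by simp
    also have "\<dots> < 0"
      using \<epsilon> near[OF z(1)] by (simp add: r_def h_def)
    finally show False using z(2) by simp
  qed
qed

lemma convex_comb_nonzero_on_compact:
  fixes f g :: "'a :: topological_space \<Rightarrow> 'b :: real_normed_vector"
  assumes K: "compact K" and f: "continuous_on K f" and g: "continuous_on K g"
    and nz: "\<And>z. z \<in> K \<Longrightarrow> f z \<noteq> 0"
  obtains \<epsilon> where "0 < \<epsilon>" "\<epsilon> < 1" "\<And>z. z \<in> K \<Longrightarrow> (1 - \<epsilon>) *\<^sub>R f z + \<epsilon> *\<^sub>R g z \<noteq> 0"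
proof (cases "K = {}")
  case True
  then show ?thesis by (intro that[of "1/2"]) auto
next
  case False
  obtain a where a: "a \<in> K" and a_min: "\<And>z. z \<in> K \<Longrightarrow> norm (f a) \<le> norm (f z)"
    using continuous_attains_inf[OF K False continuous_on_norm[OF f]] by blast
  obtain b where b_max: "\<And>z. z \<in> K \<Longrightarrow> norm (g z) \<le> norm (g b)"
    using continuous_attains_sup[OF K False continuous_on_norm[OF g]] by blast
  define m where "m = norm (f a)"
  define B where "B = norm (g b)"
  have "m > 0" using nz[OF a] by (simp add: m_def)
  have "B \<ge> 0" by (simp add: B_def)
  define \<epsilon> where "\<epsilon> = m / (2 * (m + B))"
  have \<epsilon>: "0 < \<epsilon>" "\<epsilon> < 1" and "\<epsilon> * (m + B) = m / 2"
    using \<open>m > 0\<close> \<open>B \<ge> 0\<close> by (auto simp: \<epsilon>_def field_simps)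
  show ?thesis
  proof (rule that[OF \<epsilon>])
    fix z assume z: "z \<in> K"
    have "m / 2 = (1 - \<epsilon>) * m - \<epsilon> * B"
      using \<open>\<epsilon> * (m + B) = m / 2\<close> by (simp add: algebra_simps)
    also have "\<dots> \<le> norm ((1 - \<epsilon>) *\<^sub>R f z) - norm (\<epsilon> *\<^sub>R g z)"
      using \<epsilon> a_min[OF z] b_max[OF z]
      by (intro diff_mono mult_left_mono mult_mono) (auto simp: m_def B_def)
    also have "\<dots> \<le> norm ((1 - \<epsilon>) *\<^sub>R f z + \<epsilon> *\<^sub>R g z)"
      by (rule norm_diff_ineq)
    finally show "(1 - \<epsilon>) *\<^sub>R f z + \<epsilon> *\<^sub>R g z \<noteq> 0"
      using \<open>m > 0\<close> by auto
  qed
qed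

lemma convex_comb_nonzero_right_half_disc:
  fixes c P :: "complex \<Rightarrow> complex"
  assumes c: "continuous_on UNIV c" and P: "continuous_on UNIV P"
    and c_nz: "\<And>z. Re z \<ge> 0 \<Longrightarrow> c z \<noteq> 0" and pos: "Re (P 0 / c 0) > 0"
  obtains \<epsilon> where "0 < \<epsilon>" "\<epsilon> < 1"
    "\<And>z. Re z \<ge> 0 \<Longrightarrow> norm z \<le> R \<Longrightarrow> (1 - of_real \<epsilon>) * z * c z + of_real \<epsilon> * P z \<noteq> 0"
proof -
  have "isCont c 0" "isCont P 0"
    using c P by (simp_all add: continuous_on_eq_continuous_at)
  then obtain \<delta> where "\<delta> > 0" and near:
    "\<And>z \<epsilon>. norm z < \<delta> \<Longrightarrow> Re z \<ge> 0 \<Longrightarrow> 0 < \<epsilon> \<Longrightarrow> \<epsilon> < 1 \<Longrightarrow>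
       (1 - of_real \<epsilon>) * z * c z + of_real \<epsilon> * P z \<noteq> 0"
    using convex_comb_nonzero_near_0[of c P] pos by blast
  define K where "K = {z. 0 \<le> Re z \<and> \<delta> \<le> norm z \<and> norm z \<le> R}"
  have "compact K"
  proof (rule compact_eq_bounded_closed[THEN iffD2], rule conjI)
    show "bounded K" unfolding K_def bounded_iff by auto
    show "closed K" unfolding K_def
      by (intro closed_Collect_conj closed_Collect_le continuous_intros)
  qed
  moreover have "continuous_on K (\<lambda>z. z * c z)" "continuous_on K P"
    using continuous_on_subset[OF c, of K] continuous_on_subset[OF P, of K]
    by (auto intro: continuous_on_mult continuous_on_id)
  moreover have "z * c z \<noteq> 0" if "z \<in> K" for z
    using that \<open>\<delta> > 0\<close> c_nz by (auto simp: K_def)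
  ultimately obtain \<epsilon> where \<epsilon>: "0 < \<epsilon>" "\<epsilon> < 1"
    and far: "\<And>z. z \<in> K \<Longrightarrow> (1 - \<epsilon>) *\<^sub>R (z * c z) + \<epsilon> *\<^sub>R P z \<noteq> 0"
    using convex_comb_nonzero_on_compact by blast
  show ?thesis
  proof (rule that[OF \<epsilon>])
    fix z assume "Re z \<ge> 0" "norm z \<le> R"
    then show "(1 - of_real \<epsilon>) * z * c z + of_real \<epsilon> * P z \<noteq> 0"
      using near[of z \<epsilon>] far[of z] \<epsilon>
      by (cases "norm z < \<delta>") (auto simp: K_def scaleR_conv_of_real mult.assoc)
  qed
qed

lemma eigenvalue_of_real_mult_diag_column_iff:
  fixes A :: "real mat"
  assumes A: "A \<in> carrier_mat n n" and k: "k < n"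
  shows "eigenvalue (map_mat complex_of_real (A * mat_diag n (\<lambda>j. if j = k then \<epsilon> else 1))) \<mu> \<longleftrightarrow>
    (1 - of_real \<epsilon>) * \<mu> * poly (map_poly complex_of_real (char_poly (mat_delete A k k))) \<mu>
      + of_real \<epsilon> * poly (map_poly complex_of_real (char_poly A)) \<mu> = 0"
proof -
  have AD: "A * mat_diag n (\<lambda>j. if j = k then \<epsilon> else 1) \<in> carrier_mat n n"
    using A by simp
  show ?thesis
    using AD by (simp add: eigenvalue_root_char_poly[of _ n] of_real_hom.char_poly_hom[OF AD]
        char_poly_mult_diag_column[OF A k] of_real_hom.map_poly_hom_add
        of_real_hom.map_poly_hom_smult of_real_hom.map_poly_pCons_hom algebra_simps)
qed

lemma hurwitz_stable_mult_diag_column: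
  fixes A :: "real mat"
  assumes A: "A \<in> carrier_mat n n" and k: "k < n"
    and stable: "hurwitz_stable (mat_delete A k k)"
    and det: "(-1) ^ n * det A > 0"
  obtains \<epsilon> where "0 < \<epsilon>"
    "hurwitz_stable (A * mat_diag n (\<lambda>j. if j = k then \<epsilon> else 1))"
proof -
  define c where "c = poly (map_poly complex_of_real (char_poly (mat_delete A k k)))"
  define P where "P = poly (map_poly complex_of_real (char_poly A))"
  have A': "mat_delete A k k \<in> carrier_mat (n - 1) (n - 1)"
    using A by (rule mat_delete_carrier)
  have c_nz: "c z \<noteq> 0" if "Re z \<ge> 0" for z
    using stable that A' unfolding hurwitz_stable_def c_def
    by (auto simp: eigenvalue_root_char_poly[of _ "n - 1"] of_real_hom.char_poly_hom)
  have "P 0 = of_real ((-1) ^ n * det A)" "c 0 = of_real (poly (char_poly (mat_delete A k k)) 0)"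
    using of_real_hom.poly_map_poly[of _ 0] by (simp_all add: P_def c_def poly_char_poly_0[OF A])
  then have pos: "Re (P 0 / c 0) > 0"
    using hurwitz_stable_char_poly_pos[OF stable A', of 0] det by simp
  have cont: "continuous_on UNIV c" "continuous_on UNIV P"
    unfolding c_def P_def by (intro continuous_intros)+
  define R where "R = (\<Sum>i<n. \<Sum>j<n. \<bar>A $$ (i,j)\<bar>)"
  obtain \<epsilon> where \<epsilon>: "0 < \<epsilon>" "\<epsilon> < 1" and no_root:
    "\<And>z. Re z \<ge> 0 \<Longrightarrow> norm z \<le> R \<Longrightarrow> (1 - of_real \<epsilon>) * z * c z + of_real \<epsilon> * P z \<noteq> 0"
    using convex_comb_nonzero_right_half_disc[OF cont c_nz pos] by blast
  define AD where "AD = map_mat complex_of_real (A * mat_diag n (\<lambda>j. if j = k then \<epsilon> else 1))"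
  have AD: "AD \<in> carrier_mat n n"
    using A by (simp add: AD_def)
  have entry_le: "norm (AD $$ (i,j)) \<le> \<bar>A $$ (i,j)\<bar>" if "i < n" "j < n" for i j
    using A that \<epsilon> by (simp add: AD_def mat_diag_mult_right abs_mult mult_left_le del: of_real_mult)
  have "norm \<mu> \<le> R" if "eigenvalue AD \<mu>" for \<mu>
  proof -
    have "norm \<mu> \<le> (\<Sum>i<n. \<Sum>j<n. norm (AD $$ (i,j)))"
      by (rule eigenvalue_norm_le_sum_norm_entries[OF AD that])
    also have "\<dots> \<le> R"
      unfolding R_def by (intro sum_mono) (simp add: entry_le)
    finally show ?thesis .
  qed
  moreover have "(1 - of_real \<epsilon>) * \<mu> * c \<mu> + of_real \<epsilon> * P \<mu> = 0" if "eigenvalue AD \<mu>" for \<mu>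
    using that eigenvalue_of_real_mult_diag_column_iff[OF A k] by (simp add: AD_def c_def P_def)
  ultimately have "hurwitz_stable (A * mat_diag n (\<lambda>j. if j = k then \<epsilon> else 1))"
    using A no_root unfolding hurwitz_stable_def AD_def by (force simp: mat_diag_def)
  with \<epsilon> show ?thesis by (intro that)
qed

theorem mainTheorem7:
  fixes A :: "real mat" and n :: nat
  assumes "A \<in> carrier_mat n n"
    and "sgn (det A) = (-1) ^ n"
    and "\<exists>k<n. hurwitz_stable (principal_del A k)"
  shows "\<exists>D \<in> carrier_mat n n. positive_diagonal D \<and> hurwitz_stable (A * D)"
proof -
  obtain k where k: "k < n" and "hurwitz_stable (principal_del A k)"
    using assms(3) by blast
  then have stable: "hurwitz_stable (mat_delete A k k)"
    by (simp add: principal_del_eq_mat_delete[OF assms(1) k])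
  have "(-1) ^ n * det A > 0"
    using assms(2) by (cases "det A" "0 :: real" rule: linorder_cases) (auto simp: sgn_real_def)
  then obtain \<epsilon> where "0 < \<epsilon>" and "hurwitz_stable (A * mat_diag n (\<lambda>j. if j = k then \<epsilon> else 1))"
    using hurwitz_stable_mult_diag_column[OF assms(1) k stable] by blast
  moreover have "positive_diagonal (mat_diag n (\<lambda>j. if j = k then \<epsilon> else 1))"
    using \<open>0 < \<epsilon>\<close> by (auto simp: positive_diagonal_def diagonal_mat_def mat_diag_def)
  ultimately show ?thesis
    using mat_diag_dim by blast
qed

end
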